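(* Let $r\ge 3$ be an integer, let $\varphi$ be an instance of Exact $r$-SAT, and let $G(\varphi)$ be the graph constructed from $\varphi$ as described in the context. If $\varphi$ is satisfiable, then $\mathrm{wcol}_r(G(\varphi)) \leq 2r-1$.
   Context: Exact $r$-SAT: given a CNF formula $\varphi$ with clauses $c_1,\dots,c_m$ over variables $x_1,\dots,x_n$ such that each clause contains exactly $r$ different variables, decide whether $\varphi$ is satisfiable. An $\ell$-subdivided edge between $a$ and $b$ is an induced path with $\ell$ internal vertices (subdivision vertices) joining $a$ and $b$, whose internal vertices have no other neighbors. Construction of $G(\varphi)$: for each clause $c_i$ create $2r$ vertices $u_i^1,\dots,u_i^{2r}$. For each variable $x_j$ create two vertices $v_j,v'_j$ (for the literals $x_j$ and $\overline{x}_j$) joined by an edge. For each clause $c_i$ containing literal $x_j$, add two $(r-2)$-subdivided edges from $v_j$ to each of $u_i^1,\dots,u_i^{2r}$; for each clause $c_i$ containing $\overline{x}_j$, add two $(r-2)$-subdivided edges from $v'_j$ to each of $u_i^1,\dots,u_i^{2r}$. Weak coloring numbers: for a graph $G=(V,E)$ and a total order $\sigma$ of $V$, a vertex $v\neq u$ is weakly $r$-reachable from $u$ if $u <_\sigma v$ and there is a $u$–$v$ path $P$ of length at most $r$ all of whose vertices other than $u,v$ precede $v$ in $\sigma$; $\mathrm{wreach}_r(u,G_\sigma)$ is the set of such $v$, and $\mathrm{wcol}_r(G)=\min_\sigma\max_u|\mathrm{wreach}_r(u,G_\sigma)|$ over all total orders $\sigma$ of $V$. *)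

theory Defs
  imports Main
begin

text \<open>A literal is a pair (j, b): variable index j with polarity b
  (b = True for x_j, b = False for the negation of x_j).\<close>

type_synonym literal = "nat \<times> bool"
type_synonym clause = "literal set"

definition exact_rSAT_instance :: "nat \<Rightarrow> nat \<Rightarrow> clause list \<Rightarrow> bool" where
  "exact_rSAT_instance r n cls \<longleftrightarrow>
     (\<forall>C \<in> set cls. card C = r \<and> card (fst ` C) = r \<and> fst ` C \<subseteq> {..<n})"

definition satisfiable :: "clause list \<Rightarrow> bool" where
  "satisfiable cls \<longleftrightarrow> (\<exists>a :: nat \<Rightarrow> bool. \<forall>C \<in> set cls. \<exists>(j, b) \<in> C. a j = b)"

text \<open>Vertices: Ucl i k is u_i^(k+1) (k < 2r); Vlit j True is v_j, Vlit j False is v'_j;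
  Ssub i j b k t p is the p-th subdivision vertex (1 <= p <= r-2) of the t-th (t < 2)
  subdivided edge between the literal vertex of (j,b) and u_i^(k+1), where (j,b) is a
  literal of clause c_i.\<close>

datatype gvert = Ucl nat nat | Vlit nat bool | Ssub nat nat bool nat nat nat

definition Gphi_verts :: "nat \<Rightarrow> nat \<Rightarrow> clause list \<Rightarrow> gvert set" where
  "Gphi_verts r n cls =
     {Ucl i k | i k. i < length cls \<and> k < 2 * r}
   \<union> {Vlit j b | j b. j < n}
   \<union> {Ssub i j b k t p | i j b k t p. i < length cls \<and> (j, b) \<in> cls ! i \<and> k < 2 * r
        \<and> t < 2 \<and> 1 \<le> p \<and> p \<le> r - 2}"

definition Gphi_edge :: "nat \<Rightarrow> nat \<Rightarrow> clause list \<Rightarrow> gvert \<Rightarrow> gvert \<Rightarrow> bool" where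
  "Gphi_edge r n cls x y \<longleftrightarrow>
     (\<exists>j < n. {x, y} = {Vlit j True, Vlit j False})
   \<or> (\<exists>i < length cls. \<exists>j b. (j, b) \<in> cls ! i \<and> (\<exists>k < 2 * r. \<exists>t < 2.
        {x, y} = {Vlit j b, Ssub i j b k t 1}
      \<or> {x, y} = {Ssub i j b k t (r - 2), Ucl i k}
      \<or> (\<exists>p. 1 \<le> p \<and> p < r - 2 \<and> {x, y} = {Ssub i j b k t p, Ssub i j b k t (p + 1)})))"

text \<open>A graph is given by a vertex set V and a symmetric adjacency relation E.
  A total order sigma of V is represented by an injective rank function on V:
  u <_sigma v iff ord u < ord v.\<close>

definition is_path :: "'a set \<Rightarrow> ('a \<Rightarrow> 'a \<Rightarrow> bool) \<Rightarrow> 'a list \<Rightarrow> bool" where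
  "is_path V E P \<longleftrightarrow> P \<noteq> [] \<and> distinct P \<and> set P \<subseteq> V \<and>
     (\<forall>i. Suc i < length P \<longrightarrow> E (P ! i) (P ! Suc i))"

definition wreach :: "nat \<Rightarrow> 'a set \<Rightarrow> ('a \<Rightarrow> 'a \<Rightarrow> bool) \<Rightarrow> ('a \<Rightarrow> nat) \<Rightarrow> 'a \<Rightarrow> 'a set" where
  "wreach r V E ord u = {v \<in> V. v \<noteq> u \<and> ord u < ord v \<and>
     (\<exists>P. is_path V E P \<and> hd P = u \<and> last P = v \<and> length P - 1 \<le> r \<and>
          (\<forall>w \<in> set P. w \<noteq> u \<and> w \<noteq> v \<longrightarrow> ord w < ord v))}"

definition wcol :: "nat \<Rightarrow> 'a set \<Rightarrow> ('a \<Rightarrow> 'a \<Rightarrow> bool) \<Rightarrow> nat" where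
  "wcol r V E = (LEAST k. \<exists>ord :: 'a \<Rightarrow> nat. inj_on ord V \<and>
                     (\<forall>u \<in> V. card (wreach r V E ord u) \<le> k))"

end

theory Submission
  imports Defs
begin

text \<open>Fix a satisfying assignment and order the vertices in four blocks: subdivision
  vertices, clause vertices, literal vertices of false literals, literal vertices of true
  literals. A vertex weakly reachable from u lies in a block at least as high as u and as
  every inner vertex of the witnessing path. Path lengths are controlled by 1-Lipschitz
  lower bounds for the distance to a pair {v_j, v'_j} and to a clause vertex u_i^k.

  From a literal vertex only its complement is weakly reachable, the other literal vertices
  being at distance at least 2r - 2 > r. From u_i^k one reaches the r literal vertices of c_i
  and, at distance exactly r, complements of literals of c_i; such a complement is entered
  from the literal vertex, which must precede it, so the literal is false. As c_i has a
  true literal, this gives at most 2r - 1 vertices. A path from a subdivision vertex stays on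
  its subdivided edge (r - 3 further vertices) until it first leaves it at u_i^k or at the
  literal vertex v; afterwards it can only reach u_i^k, the complement of v and the r
  literal vertices of c_i, again 2r - 1 vertices in total.\<close>

lemma wcol_le:
  assumes "inj_on ord V" "\<And>u. u \<in> V \<Longrightarrow> card (wreach r V E ord u) \<le> k"
  shows "wcol r V E \<le> k"
  unfolding wcol_def by (rule Least_le) (use assms in blast)

lemma obtain_inj_rank_refining:
  fixes lev :: "'a \<Rightarrow> nat"
  assumes "finite V"
  obtains ord :: "'a \<Rightarrow> nat" where "inj_on ord V"
    "\<And>x y. x \<in> V \<Longrightarrow> y \<in> V \<Longrightarrow> ord x < ord y \<Longrightarrow> lev x \<le> lev y"
proof -
  obtain h where h: "bij_betw h V {0..<card V}"
    using ex_bij_betw_finite_nat[OF assms] by blast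
  then have h_less: "h x < card V" if "x \<in> V" for x
    using that by (auto dest: bij_betw_apply)
  define ord where "ord x = lev x * card V + h x" for x
  show thesis
  proof
    show "inj_on ord V"
    proof (rule inj_onI)
      fix x y assume "x \<in> V" "y \<in> V" "ord x = ord y"
      then have "ord x mod card V = ord y mod card V" by simp
      then have "h x = h y" using h_less \<open>x \<in> V\<close> \<open>y \<in> V\<close> by (simp add: ord_def)
      then show "x = y" using h \<open>x \<in> V\<close> \<open>y \<in> V\<close> by (auto simp: bij_betw_def inj_on_def)
    qed
  next
    fix x y assume "x \<in> V" "y \<in> V" "ord x < ord y"
    show "lev x \<le> lev y"
    proof (rule ccontr)
      assume "\<not> lev x \<le> lev y"
      then have "(lev y + 1) * card V \<le> lev x * card V" by (intro mult_right_mono) auto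
      then show False using \<open>ord x < ord y\<close> h_less[OF \<open>y \<in> V\<close>] by (simp add: ord_def)
    qed
  qed
qed

definition is_walk :: "('a \<Rightarrow> 'a \<Rightarrow> bool) \<Rightarrow> 'a list \<Rightarrow> nat \<Rightarrow> bool" where
  "is_walk E P m \<longleftrightarrow> (\<forall>c < m. E (P ! c) (P ! Suc c))"

lemma is_walkD: "is_walk E P m \<Longrightarrow> c < m \<Longrightarrow> E (P ! c) (P ! Suc c)"
  unfolding is_walk_def by blast

lemma is_walk_prefix: "is_walk E P m \<Longrightarrow> q \<le> m \<Longrightarrow> is_walk E P q"
  unfolding is_walk_def by simp

lemma wreachE:
  assumes "v \<in> wreach r V E ord u"
  obtains m P where "0 < m" "m \<le> r" "P ! 0 = u" "P ! m = v"
    "is_walk E P m" "\<And>c. c \<le> m \<Longrightarrow> P ! c \<in> V"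
    "\<And>c. c < m \<Longrightarrow> ord (P ! c) < ord v"
proof -
  from assms obtain P where P: "is_path V E P" "hd P = u" "last P = v" "length P - 1 \<le> r"
      "\<forall>w \<in> set P. w \<noteq> u \<and> w \<noteq> v \<longrightarrow> ord w < ord v"
    and "v \<noteq> u" "ord u < ord v"
    unfolding wreach_def by blast
  define m where "m = length P - 1"
  have "P \<noteq> []" "distinct P" "set P \<subseteq> V" and edges: "\<And>c. Suc c < length P \<Longrightarrow> E (P ! c) (P ! Suc c)"
    using P(1) unfolding is_path_def by auto
  then have len: "length P = Suc m" by (simp add: m_def)
  have ends: "P ! 0 = u" "P ! m = v"
    using P(2,3) \<open>P \<noteq> []\<close> by (simp_all add: hd_conv_nth last_conv_nth m_def)
  have "0 < m" using ends \<open>v \<noteq> u\<close> by (cases m) auto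
  moreover have "m \<le> r" using P(4) m_def by simp
  moreover have "is_walk E P m" using edges len by (simp add: is_walk_def)
  moreover have "P ! c \<in> V" if "c \<le> m" for c using \<open>set P \<subseteq> V\<close> that len by (simp add: subset_iff)
  moreover have "ord (P ! c) < ord v" if "c < m" for c
  proof -
    have "P ! c \<noteq> v" using ends(2) \<open>distinct P\<close> len that nth_eq_iff_index_eq[of P c m] by simp
    then show ?thesis using P(5) that len \<open>ord u < ord v\<close> by (cases "P ! c = u") auto
  qed
  ultimately show thesis using that ends by blast
qed

lemma lipschitz_walk_bound:
  fixes f :: "'a \<Rightarrow> int"
  assumes "\<And>x y. E x y \<Longrightarrow> \<bar>f x - f y\<bar> \<le> 1"
    and "is_walk E P m" and "a \<le> b" "b \<le> m"
  shows "\<bar>f (P ! b) - f (P ! a)\<bar> \<le> int (b - a)"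
  using assms(3,4)
proof (induction b rule: dec_induct)
  case (step b)
  have "\<bar>f (P ! b) - f (P ! Suc b)\<bar> \<le> 1" using assms(1) is_walkD[OF assms(2)] step by simp
  with step show ?case by linarith
qed simp

lemma card_image_Un_image_filter_le:
  assumes "finite C" "x \<in> C" "Q x"
  shows "card (f ` C \<union> g ` {y \<in> C. \<not> Q y}) \<le> 2 * card C - 1"
proof -
  have "{y \<in> C. \<not> Q y} \<subset> C" using assms(2,3) by blast
  then have "card {y \<in> C. \<not> Q y} < card C" using assms(1) psubset_card_mono by blast
  moreover have "card (f ` C \<union> g ` {y \<in> C. \<not> Q y}) \<le> card (f ` C) + card (g ` {y \<in> C. \<not> Q y})"
    by (rule card_Un_le)
  moreover have "card (f ` C) \<le> card C" "card (g ` {y \<in> C. \<not> Q y}) \<le> card {y \<in> C. \<not> Q y}"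
    using assms(1) by (simp_all add: card_image_le)
  ultimately show ?thesis by linarith
qed

lemma abs_diff_doubleton:
  fixes f :: "'a \<Rightarrow> int"
  assumes "{x, y} = {s, t}"
  shows "\<bar>f x - f y\<bar> = \<bar>f s - f t\<bar>"
  using assms by (auto simp: doubleton_eq_iff)

definition lit_vertex :: "literal \<Rightarrow> gvert" where
  "lit_vertex l = Vlit (fst l) (snd l)"

definition neg_lit :: "literal \<Rightarrow> literal" where
  "neg_lit l = (fst l, \<not> snd l)"

definition is_Ssub :: "gvert \<Rightarrow> bool" where
  "is_Ssub x \<longleftrightarrow> (case x of Ssub _ _ _ _ _ _ \<Rightarrow> True | _ \<Rightarrow> False)"

lemma Gphi_edge_sym: "Gphi_edge r n cls x y \<longleftrightarrow> Gphi_edge r n cls y x"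
  unfolding Gphi_edge_def by (simp add: insert_commute)

lemma Gphi_edgeE:
  assumes "Gphi_edge r n cls x y"
  obtains (var) j where "{x, y} = {Vlit j True, Vlit j False}"
  | (lit_end) i j b k t where "(j, b) \<in> cls ! i" "{x, y} = {Vlit j b, Ssub i j b k t 1}"
  | (clause_end) i j b k t where "(j, b) \<in> cls ! i" "{x, y} = {Ssub i j b k t (r - 2), Ucl i k}"
  | (inner) i j b k t p where "(j, b) \<in> cls ! i" "p < r - 2"
      "{x, y} = {Ssub i j b k t p, Ssub i j b k t (p + 1)}"
  using assms unfolding Gphi_edge_def
  by (elim disjE exE conjE) blast+

lemma Gphi_edge_Vlit:
  assumes "Gphi_edge r n cls (Vlit j b) y"
  shows "y = Vlit j (\<not> b) \<or> (\<exists>i k t. (j, b) \<in> cls ! i \<and> y = Ssub i j b k t 1)"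
  using assms by (cases rule: Gphi_edgeE) (auto simp: doubleton_eq_iff)

lemma Gphi_edge_Ssub:
  assumes "Gphi_edge r n cls (Ssub i j b k t p) y"
  shows "y = Vlit j b \<or> y = Ucl i k \<or> (\<exists>p'. y = Ssub i j b k t p')"
  using assms by (cases rule: Gphi_edgeE) (auto simp: doubleton_eq_iff)

lemma walk_along_chain:
  assumes "is_walk (Gphi_edge r n cls) P q"
    and "P ! 0 = Ssub i j b k t p" and "\<And>c. c \<le> q \<Longrightarrow> is_Ssub (P ! c)"
  shows "\<exists>p'. P ! q = Ssub i j b k t p'"
  using assms
proof (induction q)
  case (Suc q)
  then obtain p' where "P ! q = Ssub i j b k t p'"
    using is_walk_prefix[OF Suc.prems(1)] by force
  then have "Gphi_edge r n cls (Ssub i j b k t p') (P ! Suc q)"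
    using is_walkD[OF Suc.prems(1), of q] by simp
  with Suc.prems(3)[of "Suc q"] show ?case by (auto dest!: Gphi_edge_Ssub simp: is_Ssub_def)
qed simp

lemma walk_from_Ssub_cases:
  assumes walk: "is_walk (Gphi_edge r n cls) P m" and start: "P ! 0 = Ssub i j b k t p"
  obtains (along) p' where "P ! m = Ssub i j b k t p'"
  | (exit) q where "0 < q" "q \<le> m" "P ! q = Vlit j b \<or> P ! q = Ucl i k"
proof (cases "\<forall>c \<le> m. is_Ssub (P ! c)")
  case True
  then show thesis using walk_along_chain[OF walk start] along by auto
next
  case False
  define q where "q = (LEAST c. \<not> is_Ssub (P ! c))"
  from False obtain c where "c \<le> m" "\<not> is_Ssub (P ! c)" by auto
  then have q: "\<not> is_Ssub (P ! q)" "q \<le> m"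
    unfolding q_def by (metis LeastI, meson Least_le order_trans)
  have before_q: "is_Ssub (P ! c)" if "c < q" for c
    using not_less_Least[OF that[unfolded q_def]] by simp
  have "0 < q" using q start by (cases q) (auto simp: is_Ssub_def)
  obtain p' where "P ! (q - 1) = Ssub i j b k t p'"
    using walk_along_chain[OF is_walk_prefix[OF walk] start] before_q q \<open>0 < q\<close> by force
  then have "Gphi_edge r n cls (Ssub i j b k t p') (P ! q)"
    using is_walkD[OF walk, of "q - 1"] q \<open>0 < q\<close> by simp
  with q(1) have "P ! q = Vlit j b \<or> P ! q = Ucl i k"
    by (auto dest!: Gphi_edge_Ssub simp: is_Ssub_def)
  with \<open>0 < q\<close> q(2) show thesis by (rule exit)
qed

text \<open>Lower bounds for the distance to {v_j, v'_j} and to u_i^k, capped at 2r - 2 and r + 1.\<close>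

definition var_dist :: "nat \<Rightarrow> clause list \<Rightarrow> nat \<Rightarrow> gvert \<Rightarrow> int" where
  "var_dist r cls j x = (case x of
     Vlit j' _ \<Rightarrow> if j' = j then 0 else 2 * int r - 2
   | Ssub i j' _ _ _ p \<Rightarrow>
       if j' = j then int p else if j \<in> fst ` (cls ! i) then 2 * int r - 2 - int p else 2 * int r - 2
   | Ucl i _ \<Rightarrow> if j \<in> fst ` (cls ! i) then int r - 1 else 2 * int r - 2)"

definition clause_dist :: "nat \<Rightarrow> clause list \<Rightarrow> nat \<Rightarrow> nat \<Rightarrow> gvert \<Rightarrow> int" where
  "clause_dist r cls i k x = (case x of
     Ucl i' k' \<Rightarrow> if i' = i \<and> k' = k then 0 else int r + 1
   | Ssub i' j b k' _ p \<Rightarrow>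
       if i' = i \<and> k' = k then int r - 1 - int p else if (j, b) \<in> cls ! i then int r else int r + 1
   | Vlit j b \<Rightarrow> if (j, b) \<in> cls ! i then int r - 1 else if (j, \<not> b) \<in> cls ! i then int r else int r + 1)"

lemma clause_dist_less_r:
  assumes "clause_dist r cls i k v < int r" "\<not> is_Ssub v"
  shows "v \<in> insert (Ucl i k) (lit_vertex ` (cls ! i))"
proof (cases v)
  case (Vlit j b)
  with assms(1) have "(j, b) \<in> cls ! i" by (auto simp: clause_dist_def split: if_splits)
  then show ?thesis by (intro insertI2 image_eqI[where x = "(j, b)"]) (simp_all add: Vlit lit_vertex_def)
qed (use assms in \<open>auto simp: clause_dist_def is_Ssub_def split: if_splits\<close>)

lemma var_dist_lipschitz:
  assumes "2 \<le> r" "Gphi_edge r n cls x y"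
  shows "\<bar>var_dist r cls j x - var_dist r cls j y\<bar> \<le> 1"
  using assms(2)
proof (cases rule: Gphi_edgeE)
  case (var j')
  then show ?thesis using abs_diff_doubleton[OF var, of "var_dist r cls j"]
    by (simp add: var_dist_def)
next
  case (lit_end i j' b k t)
  then show ?thesis using abs_diff_doubleton[OF lit_end(2), of "var_dist r cls j"] assms(1)
    by (simp add: var_dist_def)
next
  case (clause_end i j' b k t)
  then show ?thesis using abs_diff_doubleton[OF clause_end(2), of "var_dist r cls j"] assms(1)
    by (force simp: var_dist_def of_nat_diff)
next
  case (inner i j' b k t p)
  then show ?thesis using abs_diff_doubleton[OF inner(3), of "var_dist r cls j"]
    by (simp add: var_dist_def)
qed

lemma clause_dist_lipschitz:
  assumes "2 \<le> r" "Gphi_edge r n cls x y"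
  shows "\<bar>clause_dist r cls i k x - clause_dist r cls i k y\<bar> \<le> 1"
  using assms(2)
proof (cases rule: Gphi_edgeE)
  case (var j)
  then show ?thesis using abs_diff_doubleton[OF var, of "clause_dist r cls i k"]
    by (simp add: clause_dist_def)
next
  case (lit_end i' j b k' t)
  then show ?thesis using abs_diff_doubleton[OF lit_end(2), of "clause_dist r cls i k"]
    by (auto simp: clause_dist_def)
next
  case (clause_end i' j b k' t)
  then show ?thesis using abs_diff_doubleton[OF clause_end(2), of "clause_dist r cls i k"] assms(1)
    by (simp add: clause_dist_def of_nat_diff)
next
  case (inner i' j b k' t p)
  then show ?thesis using abs_diff_doubleton[OF inner(3), of "clause_dist r cls i k"]
    by (simp add: clause_dist_def)
qed

lemma finite_Gphi_verts:
  assumes "\<And>C. C \<in> set cls \<Longrightarrow> finite C"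
  shows "finite (Gphi_verts r n cls)"
proof -
  let ?L = "length cls"
  have "{Ucl i k | i k. i < ?L \<and> k < 2 * r} = (\<lambda>(i, k). Ucl i k) ` ({..<?L} \<times> {..<2 * r})"
    by auto
  moreover have "{Vlit j b | j b. j < n} = (\<lambda>(j, b). Vlit j b) ` ({..<n} \<times> UNIV)"
    by auto
  moreover have "{Ssub i j b k t p | i j b k t p. i < ?L \<and> (j, b) \<in> cls ! i \<and> k < 2 * r
        \<and> t < 2 \<and> 1 \<le> p \<and> p \<le> r - 2}
      \<subseteq> (\<lambda>(i, l, k, t, p). Ssub i (fst l) (snd l) k t p) `
          ({..<?L} \<times> \<Union>(set cls) \<times> {..<2 * r} \<times> {..<2} \<times> {..r})" (is "?S \<subseteq> ?T")
  proof (rule subsetI, elim CollectE exE conjE)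
    fix x i j b k t p
    assume "x = Ssub i j b k t p" "i < ?L" "(j, b) \<in> cls ! i" "k < 2 * r" "t < 2" "p \<le> r - 2"
    then show "x \<in> (\<lambda>(i, l, k, t, p). Ssub i (fst l) (snd l) k t p) `
        ({..<?L} \<times> \<Union>(set cls) \<times> {..<2 * r} \<times> {..<2} \<times> {..r})"
      by (intro image_eqI[where x = "(i, (j, b), k, t, p)"]) auto
  qed
  moreover have "finite ?T" using assms by blast
  ultimately show ?thesis
    unfolding Gphi_verts_def using finite_subset by auto
qed

definition level :: "(nat \<Rightarrow> bool) \<Rightarrow> gvert \<Rightarrow> nat" where
  "level a x = (case x of
     Ssub _ _ _ _ _ _ \<Rightarrow> 0 | Ucl _ _ \<Rightarrow> 1 | Vlit j b \<Rightarrow> if a j = b then 3 else 2)"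

lemma walk_Vlit_same_var:
  assumes "3 \<le> r" "is_walk (Gphi_edge r n cls) P m"
    and "q \<le> m" "m - q \<le> r" "P ! q = Vlit j b" "P ! m = Vlit j' b'"
  shows "j' = j"
proof (rule ccontr)
  assume "j' \<noteq> j"
  have "\<bar>var_dist r cls j (P ! m) - var_dist r cls j (P ! q)\<bar> \<le> int (m - q)"
    using assms(1,3) lipschitz_walk_bound[where f = "var_dist r cls j" and E = "Gphi_edge r n cls",
        OF var_dist_lipschitz assms(2)] by simp
  with \<open>j' \<noteq> j\<close> assms show False by (simp add: var_dist_def)
qed

lemma walk_clause_dist:
  assumes "2 \<le> r" "is_walk (Gphi_edge r n cls) P m"
    and "q \<le> c" "c \<le> m" "P ! q = Ucl i k"
  shows "clause_dist r cls i k (P ! c) \<le> int (c - q)"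
proof -
  have "\<bar>clause_dist r cls i k (P ! c) - clause_dist r cls i k (P ! q)\<bar> \<le> int (c - q)"
    using lipschitz_walk_bound[where f = "clause_dist r cls i k" and E = "Gphi_edge r n cls",
        OF clause_dist_lipschitz[OF assms(1)] assms(2-4)] .
  then show ?thesis using assms(5) by (simp add: clause_dist_def)
qed

lemma exact_rSAT_instance_clause:
  assumes "exact_rSAT_instance r n cls" "0 < r" "C \<in> set cls"
  shows "finite C" "card C = r"
  using assms unfolding exact_rSAT_instance_def by (auto intro: card_ge_0_finite)

lemma card_Ssub_candidates_le:
  assumes "finite C" "card C = r" "3 \<le> r" "p \<in> {1..r - 2}"
  shows "card (Ssub i j b k t ` ({1..r - 2} - {p}) \<union> {Ucl i k, Vlit j (\<not> b)} \<union> lit_vertex ` C)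
    \<le> 2 * r - 1"
proof -
  let ?A = "Ssub i j b k t ` ({1..r - 2} - {p})" and ?B = "{Ucl i k, Vlit j (\<not> b)}"
  have "card ?A \<le> r - 3"
    using card_image_le[of "{1..r - 2} - {p}" "Ssub i j b k t"] assms(4) by simp
  moreover have "card ?B = 2" by simp
  moreover have "card (lit_vertex ` C) \<le> r" using card_image_le[OF assms(1)] assms(2) by simp
  moreover have "card (?A \<union> ?B \<union> lit_vertex ` C) \<le> card (?A \<union> ?B) + card (lit_vertex ` C)"
    "card (?A \<union> ?B) \<le> card ?A + card ?B" by (rule card_Un_le)+
  ultimately show ?thesis using assms(3) by linarith
qed

context
  fixes r n :: nat and cls :: "clause list" and a :: "nat \<Rightarrow> bool" and ord :: "gvert \<Rightarrow> nat"
  assumes r_ge: "3 \<le> r"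
    and ord_level: "\<And>x y. x \<in> Gphi_verts r n cls \<Longrightarrow> y \<in> Gphi_verts r n cls \<Longrightarrow>
      ord x < ord y \<Longrightarrow> level a x \<le> level a y"
begin

lemma wreach_GphiE:
  assumes "v \<in> wreach r (Gphi_verts r n cls) (Gphi_edge r n cls) ord u"
  obtains m P where "0 < m" "m \<le> r" "P ! 0 = u" "P ! m = v" "v \<noteq> u" "v \<in> Gphi_verts r n cls"
    "is_walk (Gphi_edge r n cls) P m"
    "\<And>c. c \<le> m \<Longrightarrow> level a (P ! c) \<le> level a v"
proof -
  obtain m P where m: "0 < m" "m \<le> r" and ends: "P ! 0 = u" "P ! m = v"
    and walk: "is_walk (Gphi_edge r n cls) P m"
    and verts: "\<And>c. c \<le> m \<Longrightarrow> P ! c \<in> Gphi_verts r n cls"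
    and below: "\<And>c. c < m \<Longrightarrow> ord (P ! c) < ord v"
    using assms by (rule wreachE) blast
  have v_vert: "v \<in> Gphi_verts r n cls" using verts[of m] ends by simp
  moreover have "level a (P ! c) \<le> level a v" if "c \<le> m" for c
    using that ord_level[OF verts v_vert below, of c] ends by (cases "c = m") auto
  moreover have "v \<noteq> u" using below[of 0] m ends by auto
  ultimately show thesis using that m ends walk by blast
qed

lemma wreach_Vlit:
  "wreach r (Gphi_verts r n cls) (Gphi_edge r n cls) ord (Vlit j b) \<subseteq> {Vlit j (\<not> b)}"
proof
  fix v assume "v \<in> wreach r (Gphi_verts r n cls) (Gphi_edge r n cls) ord (Vlit j b)"
  then obtain m P where m: "0 < m" "m \<le> r" and ends: "P ! 0 = Vlit j b" "P ! m = v"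
    and "v \<noteq> Vlit j b" and walk: "is_walk (Gphi_edge r n cls) P m"
    and level: "level a (P ! 0) \<le> level a v"
    by (rule wreach_GphiE) blast
  then obtain j' b' where v: "v = Vlit j' b'"
    by (cases v) (auto simp: level_def split: if_splits)
  have "j' = j" using walk_Vlit_same_var[OF r_ge walk _ _ ends(1)] m ends v by simp
  then show "v \<in> {Vlit j (\<not> b)}" using v \<open>v \<noteq> Vlit j b\<close> by auto
qed

lemma wreach_Ucl:
  "wreach r (Gphi_verts r n cls) (Gphi_edge r n cls) ord (Ucl i k) \<subseteq>
     lit_vertex ` (cls ! i) \<union> (lit_vertex \<circ> neg_lit) ` {l \<in> cls ! i. \<not> a (fst l) = snd l}"
proof
  fix v assume "v \<in> wreach r (Gphi_verts r n cls) (Gphi_edge r n cls) ord (Ucl i k)"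
  then obtain m P where m: "m \<le> r" and ends: "P ! 0 = Ucl i k" "P ! m = v"
    and "v \<noteq> Ucl i k" and walk: "is_walk (Gphi_edge r n cls) P m"
    and level: "\<And>c. c \<le> m \<Longrightarrow> level a (P ! c) \<le> level a v"
    by (rule wreach_GphiE) blast
  have dist: "clause_dist r cls i k (P ! c) \<le> int c" if "c \<le> m" for c
    using walk_clause_dist[OF _ walk _ that ends(1)] r_ge by simp
  obtain j b where v: "v = Vlit j b"
  proof (cases v)
    case (Ucl i' k')
    then show ?thesis using dist[of m] ends m \<open>v \<noteq> Ucl i k\<close> by (auto simp: clause_dist_def)
  next
    case (Ssub i' j b k' t p)
    then show ?thesis using level[of 0] ends by (simp add: level_def)
  qed
  show "v \<in> lit_vertex ` (cls ! i) \<union> (lit_vertex \<circ> neg_lit) ` {l \<in> cls ! i. \<not> a (fst l) = snd l}"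
  proof (cases "(j, b) \<in> cls ! i")
    case True
    then show ?thesis using v by (intro UnI1 image_eqI[where x = "(j, b)"]) (simp_all add: lit_vertex_def)
  next
    case False
    txt \<open>Then v is at distance exactly r and is entered from its complement.\<close>
    with dist[of m] ends m v have neg: "(j, \<not> b) \<in> cls ! i" and "m = r"
      by (auto simp: clause_dist_def split: if_splits)
    let ?w = "P ! (m - 1)"
    have "Gphi_edge r n cls ?w v" using is_walkD[OF walk, of "m - 1"] ends \<open>m = r\<close> r_ge by simp
    then have "Gphi_edge r n cls (Vlit j b) ?w" using v Gphi_edge_sym by metis
    moreover have "clause_dist r cls i k ?w \<le> int r - 1" using dist[of "m - 1"] \<open>m = r\<close> r_ge by simp
    ultimately have "?w = Vlit j (\<not> b)"
      using False by (auto dest!: Gphi_edge_Vlit simp: clause_dist_def split: if_splits)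
    then have "a j = b" using level[of "m - 1"] v by (auto simp: level_def split: if_splits)
    then show ?thesis using neg v
      by (intro UnI2 image_eqI[where x = "(j, \<not> b)"]) (simp_all add: lit_vertex_def neg_lit_def)
  qed
qed

lemma wreach_Ssub:
  assumes "Ssub i j b k t p \<in> Gphi_verts r n cls"
  shows "wreach r (Gphi_verts r n cls) (Gphi_edge r n cls) ord (Ssub i j b k t p) \<subseteq>
     Ssub i j b k t ` ({1..r - 2} - {p}) \<union> {Ucl i k, Vlit j (\<not> b)} \<union> lit_vertex ` (cls ! i)"
    (is "_ \<subseteq> ?S")
proof
  have "(j, b) \<in> cls ! i" using assms by (simp add: Gphi_verts_def)
  then have exits: "Ucl i k \<in> ?S" "Vlit j b \<in> ?S" "Vlit j (\<not> b) \<in> ?S"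
    by (auto intro!: image_eqI[where x = "(j, b)"] simp: lit_vertex_def)
  fix v assume "v \<in> wreach r (Gphi_verts r n cls) (Gphi_edge r n cls) ord (Ssub i j b k t p)"
  then obtain m P where m: "m \<le> r" and ends: "P ! 0 = Ssub i j b k t p" "P ! m = v"
    and "v \<noteq> Ssub i j b k t p" "v \<in> Gphi_verts r n cls"
    and walk: "is_walk (Gphi_edge r n cls) P m"
    and level: "\<And>c. c \<le> m \<Longrightarrow> level a (P ! c) \<le> level a v"
    by (rule wreach_GphiE) blast
  show "v \<in> ?S"
    using walk ends(1)
  proof (cases rule: walk_from_Ssub_cases)
    case (along p')
    with ends \<open>v \<noteq> _\<close> \<open>v \<in> Gphi_verts r n cls\<close> show ?thesis by (auto simp: Gphi_verts_def)
  next
    case (exit q)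
    show ?thesis
    proof (cases "q = m")
      case True
      with exit(3) exits ends show ?thesis by auto
    next
      case False
      with exit(2) have "q < m" by simp
      from exit(3) show ?thesis
      proof
        assume "P ! q = Vlit j b"
        then obtain j' b' where v: "v = Vlit j' b'"
          using level[of q] exit(2) by (cases v) (auto simp: level_def split: if_splits)
        then have "j' = j"
          using walk_Vlit_same_var[OF r_ge walk exit(2) _ \<open>P ! q = Vlit j b\<close>] m ends v by simp
        with v exits show ?thesis by (cases "b' = b") auto
      next
        assume "P ! q = Ucl i k"
        then have "clause_dist r cls i k v < int r"
          using walk_clause_dist[OF _ walk _ order_refl \<open>P ! q = Ucl i k\<close>] r_ge \<open>q < m\<close> exit(1) m ends
          by simp
        moreover have "\<not> is_Ssub v"
          using level[of q] \<open>P ! q = Ucl i k\<close> exit(2) by (auto simp: level_def is_Ssub_def split: gvert.splits)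
        ultimately show ?thesis using clause_dist_less_r exits by blast
      qed
    qed
  qed
qed

lemma card_wreach_Gphi_le:
  assumes "exact_rSAT_instance r n cls" and sat: "\<forall>C \<in> set cls. \<exists>(j, b) \<in> C. a j = b"
    and u: "u \<in> Gphi_verts r n cls"
  shows "card (wreach r (Gphi_verts r n cls) (Gphi_edge r n cls) ord u) \<le> 2 * r - 1"
proof -
  have clause: "finite (cls ! i)" "card (cls ! i) = r" if "i < length cls" for i
    using exact_rSAT_instance_clause[OF assms(1) _ nth_mem[OF that]] r_ge by auto
  show ?thesis
  proof (cases u)
    case (Ucl i k)
    with u have i: "i < length cls" by (simp add: Gphi_verts_def)
    then have "cls ! i \<in> set cls" by simp
    with sat obtain l where l: "l \<in> cls ! i" "a (fst l) = snd l" by fastforce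
    have "card (lit_vertex ` (cls ! i) \<union> (lit_vertex \<circ> neg_lit) ` {l \<in> cls ! i. \<not> a (fst l) = snd l})
        \<le> 2 * r - 1" (is "card ?S \<le> _")
      using card_image_Un_image_filter_le[where Q = "\<lambda>l. a (fst l) = snd l", OF clause(1)[OF i] l]
      by (simp only: clause(2)[OF i])
    moreover have "card (wreach r (Gphi_verts r n cls) (Gphi_edge r n cls) ord u) \<le> card ?S"
      unfolding Ucl by (rule card_mono[OF _ wreach_Ucl]) (simp add: clause(1)[OF i])
    ultimately show ?thesis by simp
  next
    case (Vlit j b)
    then have "card (wreach r (Gphi_verts r n cls) (Gphi_edge r n cls) ord u) \<le> card {Vlit j (\<not> b)}"
      using wreach_Vlit by (intro card_mono) auto
    with r_ge show ?thesis by simp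
  next
    case (Ssub i j b k t p)
    with u have i: "i < length cls" and "p \<in> {1..r - 2}" by (auto simp: Gphi_verts_def)
    from this(2) have "card (Ssub i j b k t ` ({1..r - 2} - {p}) \<union> {Ucl i k, Vlit j (\<not> b)} \<union> lit_vertex ` (cls ! i))
        \<le> 2 * r - 1" (is "card ?S \<le> _")
      by (rule card_Ssub_candidates_le[OF clause[OF i] r_ge])
    moreover have "card (wreach r (Gphi_verts r n cls) (Gphi_edge r n cls) ord u) \<le> card ?S"
      using card_mono[OF _ wreach_Ssub[OF u[unfolded Ssub]]] clause(1)[OF i] Ssub by simp
    ultimately show ?thesis by simp
  qed
qed

end

theorem lemma3p8:
  fixes r n :: nat and cls :: "clause list"
  assumes "r \<ge> 3"
    and "exact_rSAT_instance r n cls"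
    and "satisfiable cls"
  shows "wcol r (Gphi_verts r n cls) (Gphi_edge r n cls) \<le> 2 * r - 1"
proof -
  obtain a where sat: "\<forall>C \<in> set cls. \<exists>(j, b) \<in> C. a j = b"
    using assms(3) unfolding satisfiable_def by blast
  have "finite (Gphi_verts r n cls)"
    using finite_Gphi_verts exact_rSAT_instance_clause(1)[OF assms(2)] assms(1) by simp
  then obtain ord :: "gvert \<Rightarrow> nat" where "inj_on ord (Gphi_verts r n cls)"
    and "\<And>x y. x \<in> Gphi_verts r n cls \<Longrightarrow> y \<in> Gphi_verts r n cls \<Longrightarrow> ord x < ord y \<Longrightarrow>
      level a x \<le> level a y"
    by (rule obtain_inj_rank_refining[where lev = "level a"]) iprover
  then show ?thesis
    using card_wreach_Gphi_le[OF assms(1) _ assms(2) sat] by (intro wcol_le) blast+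
qed

end
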